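(* Let $S$ be a ground set, $f$ a function from subsets of $S$ to subsets of $S$, $t\ge 1$ an integer and $u=\lfloor(\frac{t}{2}+1)^2\rfloor$. A set $\mathcal{C}\subseteq S$ is a $t$-parent-identifying scheme under the $f$-channel if and only if every subset $\mathcal{C}'\subseteq\mathcal{C}$ with $|\mathcal{C}'|\le u$ is a $t$-parent-identifying scheme under the $f$-channel.
   Context: Here $S$ is $Q^n$ or $2^Q$ for a finite set $Q$. A set $\mathcal{D}\subseteq S$ is a $t$-parent-identifying scheme under the $f$-channel if for every $\mathcal{D}'\subseteq\mathcal{D}$ with $|\mathcal{D}'|\le t$ and every $d\in f(\mathcal{D}')$, we have $\bigcap_{\mathcal{P}\subseteq\mathcal{D}:\,|\mathcal{P}|\le t,\ d\in f(\mathcal{P})}\mathcal{P}\neq\emptyset$. *)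

theory Defs
  imports Complex_Main
begin

text \<open>t-parent-identifying scheme under the f-channel (ground set implicit in the type;
parent sets and coalitions are finite sets of size at most t).\<close>
definition t_PI :: "('a set \<Rightarrow> 'a set) \<Rightarrow> nat \<Rightarrow> 'a set \<Rightarrow> bool" where
  "t_PI f t D \<longleftrightarrow>
     (\<forall>D'. D' \<subseteq> D \<and> finite D' \<and> card D' \<le> t \<longrightarrow>
        (\<forall>d \<in> f D'. \<Inter>{P. P \<subseteq> D \<and> finite P \<and> card P \<le> t \<and> d \<in> f P} \<noteq> {}))"

end

theory Submission
  imports Defs
begin

text \<open>Write \<open>\<P>(d)\<close> for the family of possible parent sets of a descendant \<open>d\<close>. Suppose
\<open>\<Inter>\<P>(d) = {}\<close>. Take \<open>P\<^sub>1, P\<^sub>2 \<in> \<P>(d)\<close> with \<open>k = |P\<^sub>1 \<inter> P\<^sub>2|\<close> minimal and, for every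
\<open>x \<in> P\<^sub>1 \<inter> P\<^sub>2\<close>, a parent set \<open>G\<^sub>x \<in> \<P>(d)\<close> avoiding \<open>x\<close>. Restricted to the union \<open>C'\<close> of all
these sets, \<open>\<P>(d)\<close> still has empty intersection. By minimality of \<open>k\<close> each \<open>G\<^sub>x\<close> meets
\<open>P\<^sub>1\<close> and \<open>P\<^sub>2\<close> in at least \<open>k\<close> points each, but \<open>P\<^sub>1 \<inter> P\<^sub>2\<close> in fewer than \<open>k\<close>, so it adds at most
\<open>t - k - 1\<close> new points, and \<open>|C'| \<le> (2t - k) + k (t - k - 1) = (t - k)(k + 2) \<le> (t/2 + 1)\<^sup>2\<close>.\<close>

definition parent_sets :: "('a set \<Rightarrow> 'a set) \<Rightarrow> nat \<Rightarrow> 'a set \<Rightarrow> 'a \<Rightarrow> 'a set set" where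
  "parent_sets f t D d = {P. P \<subseteq> D \<and> finite P \<and> card P \<le> t \<and> d \<in> f P}"

lemma t_PI_iff_Inter_parent_sets: "t_PI f t D \<longleftrightarrow> (\<forall>d. \<Inter>(parent_sets f t D d) \<noteq> {})"
proof
  assume PI: "t_PI f t D"
  show "\<forall>d. \<Inter>(parent_sets f t D d) \<noteq> {}"
  proof
    fix d
    show "\<Inter>(parent_sets f t D d) \<noteq> {}"
    proof (cases "parent_sets f t D d = {}")
      case False
      then obtain P where "P \<subseteq> D" "finite P" "card P \<le> t" "d \<in> f P"
        unfolding parent_sets_def by blast
      then show ?thesis using PI unfolding t_PI_def parent_sets_def by blast
    qed simp
  qed
next
  assume "\<forall>d. \<Inter>(parent_sets f t D d) \<noteq> {}"
  then show "t_PI f t D" unfolding t_PI_def parent_sets_def by blast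
qed

lemma parent_sets_subset:
  assumes "C' \<subseteq> C"
  shows "parent_sets f t C' d = {P \<in> parent_sets f t C d. P \<subseteq> C'}"
  using assms unfolding parent_sets_def by blast

lemma t_PI_subset:
  assumes "t_PI f t C" and "C' \<subseteq> C"
  shows "t_PI f t C'"
  unfolding t_PI_iff_Inter_parent_sets
proof
  fix d
  have "parent_sets f t C' d \<subseteq> parent_sets f t C d"
    using parent_sets_subset[OF assms(2)] by blast
  then have "\<Inter>(parent_sets f t C d) \<subseteq> \<Inter>(parent_sets f t C' d)"
    by (rule Inter_anti_mono)
  then show "\<Inter>(parent_sets f t C' d) \<noteq> {}"
    using assms(1) unfolding t_PI_iff_Inter_parent_sets by blast
qed

lemma card_Diff_Un_bound:
  assumes "finite G" "card G \<le> t" "k \<le> card (G \<inter> A)" "k \<le> card (G \<inter> B)" "card (G \<inter> A \<inter> B) < k"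
  shows "card (G - (A \<union> B)) + k + 1 \<le> t"
proof -
  have "card (G \<inter> A) + card (G \<inter> B) = card (G \<inter> A \<union> G \<inter> B) + card (G \<inter> A \<inter> (G \<inter> B))"
    using assms(1) by (intro card_Un_Int) auto
  also have "G \<inter> A \<union> G \<inter> B = G \<inter> (A \<union> B)" by blast
  also have "G \<inter> A \<inter> (G \<inter> B) = G \<inter> A \<inter> B" by blast
  finally have "card (G \<inter> A) + card (G \<inter> B) = card (G \<inter> (A \<union> B)) + card (G \<inter> A \<inter> B)" .
  moreover have "card G = card (G \<inter> (A \<union> B)) + card (G - (A \<union> B))"
    using assms(1) by (rule card_Int_Diff)
  ultimately show ?thesis using assms(2-) by linarith
qed

lemma card_Un_UN_le:
  assumes "finite I"
  shows "card (U \<union> (\<Union>x\<in>I. G x)) \<le> card U + (\<Sum>x\<in>I. card (G x - U))"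
proof -
  have "U \<union> (\<Union>x\<in>I. G x) = U \<union> (\<Union>x\<in>I. G x - U)" by blast
  then have "card (U \<union> (\<Union>x\<in>I. G x)) \<le> card U + card (\<Union>x\<in>I. G x - U)"
    using card_Un_le by metis
  also have "\<dots> \<le> card U + (\<Sum>x\<in>I. card (G x - U))"
    by (intro add_left_mono card_UN_le[OF assms])
  finally show ?thesis .
qed

text \<open>The hypothesis says \<open>c \<le> (t - k)(k + 2)\<close>, a product of two factors with sum \<open>t + 2\<close>;
the bound is AM-GM.\<close>

lemma le_floor_half_plus_one_squared:
  fixes c k t :: nat
  assumes "c + k * (k + 2) \<le> t * (k + 2)"
  shows "c \<le> nat \<lfloor>(real t / 2 + 1) ^ 2\<rfloor>"
proof -
  have "real (c + k * (k + 2)) \<le> real (t * (k + 2))"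
    using assms by (rule of_nat_mono)
  then have bound: "real c + real k * (real k + 2) \<le> real t * (real k + 2)"
    by (simp add: algebra_simps)
  have "(real t / 2 + 1) ^ 2
      = real t * (real k + 2) - real k * (real k + 2) + (real t / 2 - real k - 1) ^ 2"
    by (simp add: power2_eq_square field_simps)
  then have "real c \<le> (real t / 2 + 1) ^ 2"
    using bound zero_le_power2[of "real t / 2 - real k - 1"] by linarith
  then have "int c \<le> \<lfloor>(real t / 2 + 1) ^ 2\<rfloor>"
    by (metis floor_mono floor_of_nat)
  then show ?thesis by linarith
qed

lemma Inter_empty_within_small_set:
  fixes F :: "'a set set"
  assumes small: "\<And>P. P \<in> F \<Longrightarrow> finite P \<and> card P \<le> t" and empty: "\<Inter>F = {}"
  obtains C where "finite C" "C \<subseteq> \<Union>F" "card C \<le> nat \<lfloor>(real t / 2 + 1) ^ 2\<rfloor>"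
    "\<Inter>{P \<in> F. P \<subseteq> C} = {}"
proof -
  obtain P\<^sub>0 where "P\<^sub>0 \<in> F" using empty by blast
  then obtain P\<^sub>1 P\<^sub>2 where P\<^sub>1: "P\<^sub>1 \<in> F" and P\<^sub>2: "P\<^sub>2 \<in> F"
    and minimal: "\<And>Q\<^sub>1 Q\<^sub>2. Q\<^sub>1 \<in> F \<Longrightarrow> Q\<^sub>2 \<in> F \<Longrightarrow> card (P\<^sub>1 \<inter> P\<^sub>2) \<le> card (Q\<^sub>1 \<inter> Q\<^sub>2)"
    using ex_has_least_nat[of "\<lambda>(Q\<^sub>1, Q\<^sub>2). Q\<^sub>1 \<in> F \<and> Q\<^sub>2 \<in> F" "(P\<^sub>0, P\<^sub>0)"
        "\<lambda>(Q\<^sub>1, Q\<^sub>2). card (Q\<^sub>1 \<inter> Q\<^sub>2)"] by auto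
  define I where "I = P\<^sub>1 \<inter> P\<^sub>2"
  define k where "k = card I"
  define U where "U = P\<^sub>1 \<union> P\<^sub>2"
  have "\<forall>x. \<exists>P\<in>F. x \<notin> P" using empty by blast
  then obtain G where G: "\<And>x. G x \<in> F" "\<And>x. x \<notin> G x" by metis
  define C where "C = U \<union> (\<Union>x\<in>I. G x)"
  have fin_I: "finite I" and card_U: "card U + k \<le> 2 * t"
    using small[OF P\<^sub>1] small[OF P\<^sub>2] card_Un_Int[of P\<^sub>1 P\<^sub>2] unfolding I_def k_def U_def by auto
  have new_points: "card (G x - U) + k + 1 \<le> t" if "x \<in> I" for x
    unfolding U_def
  proof (rule card_Diff_Un_bound)
    show "k \<le> card (G x \<inter> P\<^sub>1)" "k \<le> card (G x \<inter> P\<^sub>2)"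
      using minimal[OF G(1) P\<^sub>1] minimal[OF G(1) P\<^sub>2] unfolding k_def I_def by (auto simp: Int_ac)
    have "G x \<inter> P\<^sub>1 \<inter> P\<^sub>2 \<subset> I" using that G(2) unfolding I_def by blast
    then show "card (G x \<inter> P\<^sub>1 \<inter> P\<^sub>2) < k" unfolding k_def by (rule psubset_card_mono[OF fin_I])
  qed (use small G(1) in auto)
  have card_C: "card C \<le> card U + (\<Sum>x\<in>I. card (G x - U))"
    unfolding C_def by (rule card_Un_UN_le[OF fin_I])
  have "(\<Sum>x\<in>I. card (G x - U) + (k + 1)) \<le> (\<Sum>x\<in>I. t)"
    using new_points by (intro sum_mono) simp
  then have "(\<Sum>x\<in>I. card (G x - U)) + k * (k + 1) \<le> k * t"
    unfolding sum.distrib by (simp add: k_def)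
  then have "card C + k * (k + 2) \<le> t * (k + 2)"
    using card_C card_U by (simp add: algebra_simps)
  then have "card C \<le> nat \<lfloor>(real t / 2 + 1) ^ 2\<rfloor>"
    by (rule le_floor_half_plus_one_squared)
  moreover have "finite C" "C \<subseteq> \<Union>F"
    using small P\<^sub>1 P\<^sub>2 G(1) fin_I unfolding C_def U_def by auto
  moreover have "\<Inter>{P \<in> F. P \<subseteq> C} = {}"
  proof (rule ccontr)
    assume "\<Inter>{P \<in> F. P \<subseteq> C} \<noteq> {}"
    then obtain y where y: "\<And>P. P \<in> F \<Longrightarrow> P \<subseteq> C \<Longrightarrow> y \<in> P" by blast
    then have "y \<in> I" using P\<^sub>1 P\<^sub>2 unfolding C_def U_def I_def by blast
    then have "y \<in> G y" using y[OF G(1)] unfolding C_def by blast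
    then show False using G(2) by blast
  qed
  ultimately show ?thesis using that by blast
qed

theorem corollary1:
  fixes S :: "'a set" and f :: "'a set \<Rightarrow> 'a set" and t u :: nat and C :: "'a set"
  assumes "finite S"
    and "\<And>X. X \<subseteq> S \<Longrightarrow> f X \<subseteq> S"
    and "t \<ge> 1"
    and "u = nat \<lfloor>(real t / 2 + 1) ^ 2\<rfloor>"
    and "C \<subseteq> S"
  shows "t_PI f t C \<longleftrightarrow>
           (\<forall>C'. C' \<subseteq> C \<and> finite C' \<and> card C' \<le> u \<longrightarrow> t_PI f t C')"
proof
  assume "t_PI f t C"
  then show "\<forall>C'. C' \<subseteq> C \<and> finite C' \<and> card C' \<le> u \<longrightarrow> t_PI f t C'"
    using t_PI_subset by blast
next
  assume small_PI: "\<forall>C'. C' \<subseteq> C \<and> finite C' \<and> card C' \<le> u \<longrightarrow> t_PI f t C'"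
  show "t_PI f t C"
  proof (rule ccontr)
    assume "\<not> t_PI f t C"
    then obtain d where empty: "\<Inter>(parent_sets f t C d) = {}"
      unfolding t_PI_iff_Inter_parent_sets by blast
    have small: "\<And>P. P \<in> parent_sets f t C d \<Longrightarrow> finite P \<and> card P \<le> t"
      unfolding parent_sets_def by blast
    obtain C' where "finite C'" and C'_parents: "C' \<subseteq> \<Union>(parent_sets f t C d)"
      and "card C' \<le> u" and empty': "\<Inter>{P \<in> parent_sets f t C d. P \<subseteq> C'} = {}"
      unfolding assms(4) by (rule Inter_empty_within_small_set[OF small empty])
    have "C' \<subseteq> C" using C'_parents unfolding parent_sets_def by blast
    then have "\<Inter>(parent_sets f t C' d) = {}"
      using empty' by (simp add: parent_sets_subset)
    then have "\<not> t_PI f t C'" unfolding t_PI_iff_Inter_parent_sets by blast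
    then show False using small_PI \<open>finite C'\<close> \<open>C' \<subseteq> C\<close> \<open>card C' \<le> u\<close> by blast
  qed
qed

end
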